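(* Let $d\ge 1$ and $N\in\mathbb{N}$. For every $f\in\mathcal{NN}(N)$, \[ \kappa(f) \le \inf \left\{ \kappa(\theta): f = f_{\theta} \text{ on } \mathbb{B}^d,\ \theta\in \mathbb{R}^{(d+2)N} \right\}\le 3\kappa(f). \]
   Context: $\sigma(t)=\max\{t,0\}$ is the ReLU function, $\mathbb{B}^d=\{x\in\mathbb{R}^d:\|x\|_2\le 1\}$ and $\mathbb{S}^d=\{v\in\mathbb{R}^{d+1}:\|v\|_2=1\}$. For a parameter vector $\theta=(a_1,w_1^\intercal,\dots,a_N,w_N^\intercal)^\intercal\in\mathbb{R}^{(d+2)N}$ with $a_i\in\mathbb{R}$, $w_i\in\mathbb{R}^{d+1}$, define $f_\theta(x)=\sum_{i=1}^N a_i\sigma((x^\intercal,1)w_i)$ for $x\in\mathbb{B}^d$, and $\kappa(\theta)=\sum_{i=1}^N|a_i|\,\|w_i\|_2$. $\mathcal{NN}(N)=\{f_\theta:\theta\in\mathbb{R}^{(d+2)N}\}$ (functions on $\mathbb{B}^d$). For a finite signed Borel measure $\mu$ on $\mathbb{S}^d$ let $f_\mu(x)=\int_{\mathbb{S}^d}\sigma((x^\intercal,1)v)\,d\mu(v)$, $x\in\mathbb{B}^d$, and let $\|\mu\|=|\mu|(\mathbb{S}^d)$ be its total variation. For a function $f$ of the form $f_\mu$ with $\mu$ a finitely supported (discrete) signed measure, define $\kappa(f)=\inf\{\|\mu\|: \mu \text{ finitely supported signed measure on } \mathbb{S}^d,\ f=f_\mu \text{ on }\mathbb{B}^d\}$.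 *)

theory Defs
  imports "HOL-Analysis.Analysis"
begin

text \<open>A weight w in R^(d+1) is
  represented as a pair (v, b) :: (real^'d::finite) \<times> real; the product norm is the
  Euclidean norm of R^(d+1) and (x,1) \<bullet> w = x \<bullet> v + b.\<close>

definition relu :: "real \<Rightarrow> real" where
  "relu t = max t 0"

definition unit_ball :: "(real^'d::finite) set" where
  "unit_ball = cball 0 1"

definition unit_sphere :: "((real^'d::finite) \<times> real) set" where
  "unit_sphere = sphere 0 1"

text \<open>Parameter vector theta = (a_1,w_1,...,a_N,w_N), given as a :: nat => real and
  w :: nat => (real^'d::finite) \<times> real, only indices i < N being relevant.\<close>

definition f_param :: "nat \<Rightarrow> (nat \<Rightarrow> real) \<Rightarrow> (nat \<Rightarrow> (real^'d::finite) \<times> real) \<Rightarrow> (real^'d::finite) \<Rightarrow> real" where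
  "f_param N a w x = (\<Sum>i<N. a i * relu ((x, 1) \<bullet> w i))"

definition kappa_param :: "nat \<Rightarrow> (nat \<Rightarrow> real) \<Rightarrow> (nat \<Rightarrow> (real^'d::finite) \<times> real) \<Rightarrow> real" where
  "kappa_param N a w = (\<Sum>i<N. \<bar>a i\<bar> * norm (w i))"

text \<open>NN(N): functions on the unit ball (values outside the ball are irrelevant).\<close>

definition NN :: "nat \<Rightarrow> ((real^'d::finite) \<Rightarrow> real) set" where
  "NN N = {f. \<exists>a w. \<forall>x\<in>unit_ball. f x = f_param N a w x}"

text \<open>A finitely supported signed measure on S^d: a finite set S of atoms in the sphere
  with weights c; f_mu(x) = sum c(v) relu((x,1).v), total variation = sum |c(v)|.\<close>

definition f_meas :: "((real^'d::finite) \<times> real) set \<Rightarrow> ((real^'d::finite) \<times> real \<Rightarrow> real) \<Rightarrow> (real^'d::finite) \<Rightarrow> real" where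
  "f_meas S c x = (\<Sum>v\<in>S. c v * relu ((x, 1) \<bullet> v))"

definition kappa_fun :: "((real^'d::finite) \<Rightarrow> real) \<Rightarrow> real" where
  "kappa_fun f = Inf {(\<Sum>v\<in>S. \<bar>c v\<bar>) | S c. finite S \<and> S \<subseteq> unit_sphere \<and>
                        (\<forall>x\<in>unit_ball. f x = f_meas S c x)}"

definition kappa_inf_param :: "nat \<Rightarrow> ((real^'d::finite) \<Rightarrow> real) \<Rightarrow> real" where
  "kappa_inf_param N f = Inf {kappa_param N a w | a w. \<forall>x\<in>unit_ball. f x = f_param N a w x}"

end

theory Submission
  imports Defs
begin

text \<open>
  A network with N neurons agrees on the unit ball with
  \<open>\<Sum>p\<in>P. \<beta> p * relu ((x, 1) \<bullet> p) + (x, 1) \<bullet> r\<close>, where P consists of unit vectors whose kink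
  hyperplanes cross the open ball, no two of them antipodal; this reduced form is built neuron by
  neuron and can be realised again by N neurons at cost \<open>\<Sum>|\<beta> p| + 2|r|\<close>.
  If a discrete measure c on the sphere represents the same function, the difference of the two
  representations is affine on the ball. Second differences across the kink hyperplane of an active
  direction v, taken at a point of that hyperplane avoiding all other kinks, see only the atoms
  \<open>\<plusminus>v\<close>, so kinks cancel in antipodal pairs: \<open>\<beta> p = c p + c (-p)\<close>. Writing
  \<open>relu t = (|t| + t) / 2\<close> then expresses r through c, with \<open>|r|\<close> at most half the mass of c on
  active directions plus its mass on linear ones; together \<open>\<Sum>|\<beta> p| + 2|r| \<le> 3 \<parallel>c\<parallel>\<close>.
  The lower bound only normalises the neurons of a network onto the sphere.
\<close>

text \<open>On the unit ball a neuron \<open>relu ((x, 1) \<bullet> v)\<close> is either kinked (its hyperplane meets the open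
  ball), or linear, or identically zero.\<close>

definition active_neuron :: "(real^'d::finite) \<times> real \<Rightarrow> bool" where
  "active_neuron v \<longleftrightarrow> \<bar>snd v\<bar> < norm (fst v)"

definition linear_neuron :: "(real^'d::finite) \<times> real \<Rightarrow> bool" where
  "linear_neuron v \<longleftrightarrow> norm (fst v) \<le> snd v"

lemma relu_mult_nonneg: "0 \<le> c \<Longrightarrow> relu (c * t) = c * relu t"
  by (auto simp: relu_def max_def mult_le_0_iff zero_le_mult_iff)

lemma relu_eq_relu_minus_add: "relu t = relu (- t) + t"
  by (auto simp: relu_def)

lemma relu_eq_half_abs_add: "relu t = (\<bar>t\<bar> + t) / 2"
  by (auto simp: relu_def)

lemma relu_second_difference: "relu (e + s) + relu (e - s) - 2 * relu e = max 0 (\<bar>s\<bar> - \<bar>e\<bar>)"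
  by (auto simp: relu_def max_def abs_if)

lemma inner_Pair_one_add: "(p + h, 1) \<bullet> u = (p, 1) \<bullet> u + h \<bullet> fst u"
  by (cases u) (simp add: inner_add_left)

lemma inner_Pair_one_diff: "(p - h, 1) \<bullet> u = (p, 1) \<bullet> u - h \<bullet> fst u"
  by (cases u) (simp add: inner_diff_left)

lemma relu_second_difference_neuron:
  "relu ((p + h, 1) \<bullet> u) + relu ((p - h, 1) \<bullet> u) - 2 * relu ((p, 1) \<bullet> u)
     = max 0 (\<bar>h \<bullet> fst u\<bar> - \<bar>(p, 1) \<bullet> u\<bar>)"
  unfolding inner_Pair_one_add inner_Pair_one_diff by (rule relu_second_difference)

lemma abs_inner_le_norm_on_cball:
  fixes x u :: "real^'d::finite"
  assumes "x \<in> cball 0 1"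
  shows "\<bar>x \<bullet> u\<bar> \<le> norm u"
proof -
  have "\<bar>x \<bullet> u\<bar> \<le> norm x * norm u" by (rule Cauchy_Schwarz_ineq2)
  also have "\<dots> \<le> norm u" using assms by (simp add: mult_left_le_one_le)
  finally show ?thesis .
qed

lemma relu_linear_neuron:
  assumes "x \<in> cball 0 1" "linear_neuron v"
  shows "relu ((x, 1) \<bullet> v) = (x, 1) \<bullet> v"
  using abs_inner_le_norm_on_cball[OF assms(1), of "fst v"] assms(2)
  by (cases v) (auto simp: linear_neuron_def relu_def)

lemma relu_dead_neuron:
  assumes "x \<in> cball 0 1" "\<not> active_neuron v" "\<not> linear_neuron v"
  shows "relu ((x, 1) \<bullet> v) = 0"
  using abs_inner_le_norm_on_cball[OF assms(1), of "fst v"] assms(2,3)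
  by (cases v) (auto simp: active_neuron_def linear_neuron_def relu_def)

lemma active_neuron_uminus [simp]: "active_neuron (- v) \<longleftrightarrow> active_neuron v"
  by (simp add: active_neuron_def)

lemma active_neuron_scaleR:
  assumes "t \<noteq> 0"
  shows "active_neuron (t *\<^sub>R v) \<longleftrightarrow> active_neuron v"
  using assms by (simp add: active_neuron_def abs_mult)

lemma active_not_linear_neuron: "active_neuron v \<Longrightarrow> \<not> linear_neuron v"
  by (auto simp: active_neuron_def linear_neuron_def)

lemma active_neuron_fst_nonzero: "active_neuron v \<Longrightarrow> fst v \<noteq> 0"
  by (auto simp: active_neuron_def)

lemma inner_Pair_one_eq_on_cball_imp_eq:
  fixes r r' :: "(real^'d::finite) \<times> real"
  assumes "\<forall>x\<in>cball 0 1. (x, 1) \<bullet> r = (x, 1) \<bullet> r'"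
  shows "r = r'"
proof -
  have b: "snd r = snd r'" using assms[rule_format, of 0] by (cases r, cases r') auto
  define u where "u = fst r - fst r'"
  have diff: "(x, 1) \<bullet> r - (x, 1) \<bullet> r' = x \<bullet> u" for x
    using b unfolding u_def by (cases r, cases r') (simp add: inner_diff_right)
  have "u /\<^sub>R norm u \<in> cball 0 1" by (cases "u = 0") auto
  hence "(u /\<^sub>R norm u) \<bullet> u = 0" using assms diff by (metis diff_self)
  hence "u = 0" by (simp add: dot_square_norm power2_eq_square)
  thus ?thesis using b unfolding u_def by (simp add: prod_eq_iff)
qed

lemma orthogonal_part_nonzero:
  fixes p :: "real^'d::finite" and v w :: "(real^'d) \<times> real"
  assumes "fst v \<noteq> 0" "(p, 1) \<bullet> v = 0" "(p, 1) \<bullet> w = 0" "\<forall>t. w \<noteq> t *\<^sub>R v"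
  shows "\<exists>q. q \<bullet> fst v = 0 \<and> q \<bullet> fst w \<noteq> 0"
proof -
  define l where "l = (fst w \<bullet> fst v) / (norm (fst v))\<^sup>2"
  define q where "q = fst w - l *\<^sub>R fst v"
  have qv: "q \<bullet> fst v = 0"
    unfolding q_def l_def using assms(1) by (simp add: inner_diff_left dot_square_norm)
  have "q \<noteq> 0"
  proof
    assume "q = 0"
    hence fw: "fst w = l *\<^sub>R fst v" unfolding q_def by simp
    have "snd v = - (p \<bullet> fst v)" "snd w = - (p \<bullet> fst w)"
      using assms(2,3) by (cases v, cases w, simp add: eq_neg_iff_add_eq_0 add.commute)+
    hence "snd w = l * snd v" using fw by simp
    hence "w = l *\<^sub>R v" using fw by (simp add: prod_eq_iff)
    thus False using assms(4) by blast
  qed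
  moreover have "q \<bullet> fst w = q \<bullet> q"
    using qv unfolding q_def by (simp add: inner_diff_right)
  ultimately show ?thesis using qv by (intro exI[of _ q]) simp
qed

lemma hyperplane_point_avoiding:
  fixes v :: "(real^'d::finite) \<times> real" and W :: "((real^'d) \<times> real) set"
  assumes "finite W" "active_neuron v" "\<forall>w\<in>W. \<forall>t. w \<noteq> t *\<^sub>R v"
  shows "\<exists>p. (p, 1) \<bullet> v = 0 \<and> norm p < 1 \<and> (\<forall>w\<in>W. (p, 1) \<bullet> w \<noteq> 0)"
  using assms(1,3)
proof (induction W rule: finite_induct)
  case empty
  have nz: "fst v \<noteq> 0" using assms(2) by (rule active_neuron_fst_nonzero)
  define p where "p = (- snd v / (norm (fst v))\<^sup>2) *\<^sub>R fst v"
  have "(p, 1) \<bullet> v = 0" unfolding p_def using nz by (cases v) (simp add: dot_square_norm)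
  moreover have "norm p < 1"
    unfolding p_def using nz assms(2) by (simp add: active_neuron_def power2_eq_square divide_less_eq)
  ultimately show ?case by blast
next
  case (insert w0 W)
  then obtain p where p: "(p, 1) \<bullet> v = 0" "norm p < 1" "\<forall>w\<in>W. (p, 1) \<bullet> w \<noteq> 0" by auto
  show ?case
  proof (cases "(p, 1) \<bullet> w0 = 0")
    case False
    with p show ?thesis by auto
  next
    case True
    obtain q where q: "q \<bullet> fst v = 0" "q \<bullet> fst w0 \<noteq> 0"
      using orthogonal_part_nonzero[OF active_neuron_fst_nonzero[OF assms(2)] p(1) True] insert.prems
      by auto
    have "\<forall>\<^sub>F s in at_right 0. 0 < s \<and> norm (p + s *\<^sub>R q) < 1 \<and> (\<forall>w\<in>W. (p + s *\<^sub>R q, 1) \<bullet> w \<noteq> 0)"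
    proof (intro eventually_conj eventually_at_right_less eventually_ball_finite ballI)
      have "((\<lambda>s. norm (p + s *\<^sub>R q)) \<longlongrightarrow> norm p) (at_right 0)"
        by (auto intro!: tendsto_eq_intros)
      then show "\<forall>\<^sub>F s in at_right 0. norm (p + s *\<^sub>R q) < 1" using p(2) by (rule order_tendstoD)
      show "finite W" by fact
      fix w assume "w \<in> W"
      have "((\<lambda>s. (p + s *\<^sub>R q, 1) \<bullet> w) \<longlongrightarrow> (p, 1) \<bullet> w) (at_right 0)"
        by (auto intro!: tendsto_eq_intros)
      then show "\<forall>\<^sub>F s in at_right 0. (p + s *\<^sub>R q, 1) \<bullet> w \<noteq> 0"
        using p(3) \<open>w \<in> W\<close> by (auto intro: tendsto_imp_eventually_ne)
    qed
    then obtain s where s: "0 < s" "norm (p + s *\<^sub>R q) < 1" "\<forall>w\<in>W. (p + s *\<^sub>R q, 1) \<bullet> w \<noteq> 0"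
      using eventually_happens'[OF trivial_limit_at_right_real] by blast
    have "(p + s *\<^sub>R q, 1) \<bullet> v = 0" "(p + s *\<^sub>R q, 1) \<bullet> w0 = s * (q \<bullet> fst w0)"
      using p(1) True q(1) by (simp_all add: inner_Pair_one_add)
    then show ?thesis using s q(2) by (intro exI[of _ "p + s *\<^sub>R q"]) auto
  qed
qed

lemma kink_probe_exists:
  fixes v :: "(real^'d::finite) \<times> real" and W :: "((real^'d) \<times> real) set"
  assumes "finite W" "active_neuron v" "\<forall>w\<in>W. \<forall>t. w \<noteq> t *\<^sub>R v"
  shows "\<exists>p s. 0 < s \<and> (p, 1) \<bullet> v = 0 \<and> norm p + s * norm (fst v) < 1
           \<and> (\<forall>w\<in>W. s * \<bar>fst v \<bullet> fst w\<bar> < \<bar>(p, 1) \<bullet> w\<bar>)"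
proof -
  obtain p where p: "(p, 1) \<bullet> v = 0" "norm p < 1" "\<forall>w\<in>W. (p, 1) \<bullet> w \<noteq> 0"
    using hyperplane_point_avoiding[OF assms] by blast
  have "\<forall>\<^sub>F s in at_right 0. 0 < s \<and> norm p + s * norm (fst v) < 1
          \<and> (\<forall>w\<in>W. s * \<bar>fst v \<bullet> fst w\<bar> < \<bar>(p, 1) \<bullet> w\<bar>)"
  proof (intro eventually_conj eventually_at_right_less eventually_ball_finite ballI)
    have "((\<lambda>s. norm p + s * norm (fst v)) \<longlongrightarrow> norm p) (at_right 0)"
      by (auto intro!: tendsto_eq_intros)
    then show "\<forall>\<^sub>F s in at_right 0. norm p + s * norm (fst v) < 1" using p(2) by (rule order_tendstoD)
    show "finite W" by fact
    fix w assume "w \<in> W"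
    have "((\<lambda>s. s * \<bar>fst v \<bullet> fst w\<bar>) \<longlongrightarrow> 0) (at_right 0)"
      by (auto intro!: tendsto_eq_intros)
    then show "\<forall>\<^sub>F s in at_right 0. s * \<bar>fst v \<bullet> fst w\<bar> < \<bar>(p, 1) \<bullet> w\<bar>"
      using p(3) \<open>w \<in> W\<close> by (intro order_tendstoD) auto
  qed
  then obtain s where "0 < s \<and> norm p + s * norm (fst v) < 1
      \<and> (\<forall>w\<in>W. s * \<bar>fst v \<bullet> fst w\<bar> < \<bar>(p, 1) \<bullet> w\<bar>)"
    using eventually_happens'[OF trivial_limit_at_right_real] by blast
  then show ?thesis using p(1) by blast
qed

text \<open>At a point p of the hyperplane of v that avoids all other kinks, the second difference in
  direction \<open>fst v\<close> kills every neuron except those parallel to v.\<close>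

lemma relu_sum_affine_kink_cancel:
  fixes Q :: "((real^'d::finite) \<times> real) set" and r v :: "(real^'d) \<times> real"
  assumes "finite Q"
    and affine: "\<forall>x\<in>cball 0 1. (\<Sum>u\<in>Q. c u * relu ((x, 1) \<bullet> u)) = (x, 1) \<bullet> r"
    and "active_neuron v"
  shows "(\<Sum>u\<in>{u\<in>Q. \<exists>t. t \<noteq> 0 \<and> u = t *\<^sub>R v}. c u * norm u) = 0"
proof -
  define Par where "Par = {u\<in>Q. \<exists>t. t \<noteq> 0 \<and> u = t *\<^sub>R v}"
  define W where "W = {u\<in>Q. u \<noteq> 0 \<and> u \<notin> Par}"
  have "finite W" unfolding W_def using \<open>finite Q\<close> by simp
  moreover have "\<forall>w\<in>W. \<forall>t. w \<noteq> t *\<^sub>R v" unfolding W_def Par_def by force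
  ultimately obtain p s where ps: "0 < s" "(p, 1) \<bullet> v = 0" "norm p + s * norm (fst v) < 1"
      "\<forall>w\<in>W. s * \<bar>fst v \<bullet> fst w\<bar> < \<bar>(p, 1) \<bullet> w\<bar>"
    using kink_probe_exists[OF _ assms(3)] by blast
  define h where "h = s *\<^sub>R fst v"
  define K where "K = s * (norm (fst v))\<^sup>2 / norm v"
  have "norm h = s * norm (fst v)" unfolding h_def using ps(1) by simp
  hence "norm p \<le> 1 \<and> norm (p + h) \<le> 1 \<and> norm (p - h) \<le> 1"
    using ps(3) norm_triangle_ineq[of p h] norm_triangle_ineq4[of p h] norm_ge_zero[of h] by linarith
  hence in_ball: "p \<in> cball 0 1" "p + h \<in> cball 0 1" "p - h \<in> cball 0 1" by auto
  have "v \<noteq> 0" using active_neuron_fst_nonzero[OF assms(3)] by auto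
  have second_diff: "relu ((p + h, 1) \<bullet> u) + relu ((p - h, 1) \<bullet> u) - 2 * relu ((p, 1) \<bullet> u)
      = (if u \<in> Par then norm u * K else 0)" if "u \<in> Q" for u
  proof (cases "u \<in> Par")
    case True
    then obtain t where "u = t *\<^sub>R v" by (auto simp: Par_def)
    then show ?thesis using True ps(1,2) \<open>v \<noteq> 0\<close> unfolding relu_second_difference_neuron
      by (simp add: h_def K_def abs_mult dot_square_norm)
  next
    case False
    show ?thesis
    proof (cases "u = 0")
      case False
      with \<open>u \<notin> Par\<close> that have "s * \<bar>fst v \<bullet> fst u\<bar> < \<bar>(p, 1) \<bullet> u\<bar>"
        using ps(4) unfolding W_def by blast
      then show ?thesis
        using \<open>u \<notin> Par\<close> ps(1) unfolding relu_second_difference_neuron by (simp add: h_def abs_mult)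
    qed (simp add: relu_def)
  qed
  have "(\<Sum>u\<in>Q. c u * (relu ((p + h, 1) \<bullet> u) + relu ((p - h, 1) \<bullet> u) - 2 * relu ((p, 1) \<bullet> u)))
      = (\<Sum>u\<in>Q. c u * relu ((p + h, 1) \<bullet> u)) + (\<Sum>u\<in>Q. c u * relu ((p - h, 1) \<bullet> u))
        - 2 * (\<Sum>u\<in>Q. c u * relu ((p, 1) \<bullet> u))"
    by (simp add: algebra_simps sum.distrib sum_subtractf sum_distrib_left)
  also have "\<dots> = (p + h, 1) \<bullet> r + (p - h, 1) \<bullet> r - 2 * ((p, 1) \<bullet> r)"
    using affine in_ball by simp
  also have "\<dots> = 0" by (simp add: inner_Pair_one_add inner_Pair_one_diff)
  finally have "(\<Sum>u\<in>Q. c u * (if u \<in> Par then norm u * K else 0)) = 0"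
    using second_diff by (simp cong: sum.cong)
  moreover have "(\<Sum>u\<in>Par. c u * norm u) * K = (\<Sum>u\<in>Q. c u * (if u \<in> Par then norm u * K else 0))"
    unfolding sum_distrib_right using \<open>finite Q\<close>
    by (intro sum.mono_neutral_cong_left) (auto simp: Par_def)
  ultimately have "(\<Sum>u\<in>Par. c u * norm u) * K = 0" by simp
  moreover have "K \<noteq> 0"
    unfolding K_def using ps(1) \<open>v \<noteq> 0\<close> active_neuron_fst_nonzero[OF assms(3)] by simp
  ultimately show ?thesis unfolding Par_def by simp
qed

lemma neq_uminus_if_nonzero:
  fixes v :: "'a::real_vector"
  shows "v \<noteq> 0 \<Longrightarrow> v \<noteq> - v"
  by (metis eq_neg_iff_add_eq_0 scaleR_2 scaleR_eq_0_iff zero_neq_numeral)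

lemma relu_sum_affine_antipodal_cancel:
  fixes Q :: "((real^'d::finite) \<times> real) set" and r :: "(real^'d) \<times> real"
  assumes "finite Q" "Q \<subseteq> sphere 0 1" "\<forall>u\<in>Q. - u \<in> Q"
    and affine: "\<forall>x\<in>cball 0 1. (\<Sum>u\<in>Q. c u * relu ((x, 1) \<bullet> u)) = (x, 1) \<bullet> r"
    and "v \<in> Q" "active_neuron v"
  shows "c v + c (- v) = 0"
proof -
  have unit: "norm u = 1" if "u \<in> Q" for u using that assms(2) by auto
  have "{u\<in>Q. \<exists>t. t \<noteq> 0 \<and> u = t *\<^sub>R v} = {v, - v}"
  proof (intro equalityI subsetI)
    fix u assume "u \<in> {u\<in>Q. \<exists>t. t \<noteq> 0 \<and> u = t *\<^sub>R v}"
    then obtain t where "u \<in> Q" "u = t *\<^sub>R v" by auto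
    moreover from this have "\<bar>t\<bar> = 1" using unit[of u] unit[OF \<open>v \<in> Q\<close>] by simp
    ultimately show "u \<in> {v, - v}" by (cases "t \<ge> 0") auto
  next
    fix u assume "u \<in> {v, - v}"
    then show "u \<in> {u\<in>Q. \<exists>t. t \<noteq> 0 \<and> u = t *\<^sub>R v}"
      using assms(3,5) by (auto intro: exI[of _ 1] exI[of _ "-1"])
  qed
  moreover have "v \<noteq> - v" using unit[OF \<open>v \<in> Q\<close>] by (intro neq_uminus_if_nonzero) auto
  ultimately show ?thesis
    using relu_sum_affine_kink_cancel[OF assms(1) affine assms(6)] unit assms(3,5) by simp
qed

lemma relu_sum_affine_linear_part:
  fixes Q :: "((real^'d::finite) \<times> real) set" and r :: "(real^'d) \<times> real"
  assumes "finite Q" "Q \<subseteq> sphere 0 1" "\<forall>u\<in>Q. - u \<in> Q"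
    and affine: "\<forall>x\<in>cball 0 1. (\<Sum>u\<in>Q. c u * relu ((x, 1) \<bullet> u)) = (x, 1) \<bullet> r"
  shows "r = (\<Sum>v\<in>{v\<in>Q. active_neuron v}. (c v / 2) *\<^sub>R v) + (\<Sum>v\<in>{v\<in>Q. linear_neuron v}. c v *\<^sub>R v)"
proof (rule inner_Pair_one_eq_on_cball_imp_eq, rule ballI)
  fix x :: "real^'d" assume x: "x \<in> cball 0 1"
  define Qa where "Qa = {v\<in>Q. active_neuron v}"
  define Ql where "Ql = {v\<in>Q. linear_neuron v}"
  let ?z = "\<lambda>v. (x, 1) \<bullet> v"
  have odd: "c (- v) = - c v" if "v \<in> Qa" for v
  proof -
    have "c v + c (- v) = 0"
      using relu_sum_affine_antipodal_cancel[OF assms] that unfolding Qa_def by blast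
    then show ?thesis by linarith
  qed
  have "(\<Sum>v\<in>Qa. c v * \<bar>?z v\<bar>) = (\<Sum>v\<in>Qa. c (- v) * \<bar>?z (- v)\<bar>)"
    by (rule sum.reindex_bij_witness[of _ uminus uminus]) (auto simp: Qa_def assms(3))
  also have "\<dots> = - (\<Sum>v\<in>Qa. c v * \<bar>?z v\<bar>)"
    by (simp add: odd inner_minus_right sum_negf[symmetric] cong: sum.cong)
  finally have abs_part: "(\<Sum>v\<in>Qa. c v * \<bar>?z v\<bar>) = 0" by simp
  have "(x, 1) \<bullet> r = (\<Sum>v\<in>Q. c v * relu (?z v))" using affine x by simp
  also have "\<dots> = (\<Sum>v\<in>Q. if active_neuron v then c v * relu (?z v) else 0)
                 + (\<Sum>v\<in>Q. if linear_neuron v then c v * ?z v else 0)"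
    unfolding sum.distrib[symmetric]
    by (rule sum.cong) (auto simp: relu_linear_neuron[OF x] relu_dead_neuron[OF x] active_not_linear_neuron)
  also have "\<dots> = (\<Sum>v\<in>Qa. c v * relu (?z v)) + (\<Sum>v\<in>Ql. c v * ?z v)"
    unfolding Qa_def Ql_def using assms(1) by (simp add: sum.inter_filter)
  also have "\<dots> = (\<Sum>v\<in>Qa. c v * \<bar>?z v\<bar>) / 2 + (\<Sum>v\<in>Qa. c v / 2 * ?z v) + (\<Sum>v\<in>Ql. c v * ?z v)"
    by (simp add: relu_eq_half_abs_add sum_divide_distrib[symmetric] sum.distrib[symmetric] algebra_simps)
  also have "\<dots> = (x, 1) \<bullet> ((\<Sum>v\<in>Qa. (c v / 2) *\<^sub>R v) + (\<Sum>v\<in>Ql. c v *\<^sub>R v))"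
    by (simp add: abs_part inner_add_right inner_sum_right)
  finally show "(x, 1) \<bullet> r = (x, 1) \<bullet> ((\<Sum>v\<in>Qa. (c v / 2) *\<^sub>R v) + (\<Sum>v\<in>Ql. c v *\<^sub>R v))" .
qed

lemma reduced_cost_le_three_total_variation:
  fixes S P :: "((real^'d::finite) \<times> real) set" and r :: "(real^'d) \<times> real"
  assumes "finite S" "S \<subseteq> sphere 0 1" "finite P" "P \<subseteq> sphere 0 1"
    and P_active: "\<forall>p\<in>P. active_neuron p \<and> - p \<notin> P"
    and eq: "\<forall>x\<in>cball 0 1. (\<Sum>v\<in>S. c v * relu ((x, 1) \<bullet> v))
                           = (\<Sum>p\<in>P. \<beta> p * relu ((x, 1) \<bullet> p)) + (x, 1) \<bullet> r"
  shows "(\<Sum>p\<in>P. \<bar>\<beta> p\<bar>) + 2 * norm r \<le> 3 * (\<Sum>v\<in>S. \<bar>c v\<bar>)"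
proof -
  txt \<open>Both representations are rewritten over a common support Q, closed under negation, so that
    the cancellation lemmas apply to the coefficients \<open>c' - \<beta>'\<close>.\<close>
  define Q where "Q = S \<union> P \<union> uminus ` (S \<union> P)"
  define c' where "c' v = (if v \<in> S then c v else 0)" for v
  define \<beta>' where "\<beta>' v = (if v \<in> P then \<beta> v else 0)" for v
  define Qa where "Qa = {v\<in>Q. active_neuron v}"
  define Ql where "Ql = {v\<in>Q. linear_neuron v}"
  have Q: "finite Q" "Q \<subseteq> sphere 0 1" "\<forall>u\<in>Q. - u \<in> Q"
    unfolding Q_def using assms(1-4) by (auto simp: image_iff simp del: uminus_Pair)
  have "S \<subseteq> Q" "P \<subseteq> Qa" "uminus ` P \<subseteq> Qa" "Qa \<subseteq> Q" "Ql \<subseteq> Q"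
    unfolding Q_def Qa_def Ql_def using P_active by (auto simp del: uminus_Pair)
  have sum_c': "(\<Sum>v\<in>Q. c' v * g v) = (\<Sum>v\<in>S. c v * g v)" for g
    using Q(1) \<open>S \<subseteq> Q\<close> by (intro sum.mono_neutral_cong_right) (auto simp: c'_def)
  have sum_\<beta>': "(\<Sum>v\<in>Q. \<beta>' v * g v) = (\<Sum>p\<in>P. \<beta> p * g p)" for g
    using Q(1) \<open>P \<subseteq> Qa\<close> \<open>Qa \<subseteq> Q\<close> by (intro sum.mono_neutral_cong_right) (auto simp: \<beta>'_def)
  have affine: "\<forall>x\<in>cball 0 1. (\<Sum>v\<in>Q. (c' v - \<beta>' v) * relu ((x, 1) \<bullet> v)) = (x, 1) \<bullet> r"
    using eq by (simp add: left_diff_distrib sum_subtractf sum_c' sum_\<beta>')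
  have \<beta>_eq: "\<beta> p = c' p + c' (- p)" if "p \<in> P" for p
  proof -
    have "(c' p - \<beta>' p) + (c' (- p) - \<beta>' (- p)) = 0"
      using relu_sum_affine_antipodal_cancel[OF Q affine, of p] that \<open>P \<subseteq> Qa\<close> unfolding Qa_def by blast
    then show ?thesis using that P_active by (simp add: \<beta>'_def)
  qed
  have \<beta>_le: "(\<Sum>p\<in>P. \<bar>\<beta> p\<bar>) \<le> (\<Sum>v\<in>Qa. \<bar>c' v\<bar>)"
  proof -
    have "(\<Sum>p\<in>P. \<bar>\<beta> p\<bar>) \<le> (\<Sum>p\<in>P. \<bar>c' p\<bar> + \<bar>c' (- p)\<bar>)"
      by (intro sum_mono) (simp add: \<beta>_eq abs_triangle_ineq)
    also have "\<dots> = (\<Sum>v\<in>P. \<bar>c' v\<bar>) + (\<Sum>v\<in>uminus ` P. \<bar>c' v\<bar>)"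
      by (simp add: sum.distrib sum.reindex inj_on_def)
    also have "\<dots> = (\<Sum>v\<in>P \<union> uminus ` P. \<bar>c' v\<bar>)"
      using assms(3) P_active by (intro sum.union_disjoint[symmetric]) auto
    also have "\<dots> \<le> (\<Sum>v\<in>Qa. \<bar>c' v\<bar>)"
      using Q(1) \<open>P \<subseteq> Qa\<close> \<open>uminus ` P \<subseteq> Qa\<close> \<open>Qa \<subseteq> Q\<close>
      by (intro sum_mono2) (auto intro: finite_subset)
    finally show ?thesis .
  qed
  have r_le: "norm r \<le> ((\<Sum>v\<in>Qa. \<bar>c' v\<bar>) + (\<Sum>v\<in>Qa. \<bar>\<beta>' v\<bar>)) / 2 + (\<Sum>v\<in>Ql. \<bar>c' v\<bar>)"
  proof -
    have unit: "norm v = 1" if "v \<in> Q" for v using that Q(2) by auto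
    have "norm r \<le> (\<Sum>v\<in>Qa. norm (((c' v - \<beta>' v) / 2) *\<^sub>R v)) + (\<Sum>v\<in>Ql. norm ((c' v - \<beta>' v) *\<^sub>R v))"
      unfolding relu_sum_affine_linear_part[OF Q affine] Qa_def[symmetric] Ql_def[symmetric]
      by (intro order_trans[OF norm_triangle_ineq] add_mono norm_sum)
    also have "\<dots> \<le> (\<Sum>v\<in>Qa. (\<bar>c' v\<bar> + \<bar>\<beta>' v\<bar>) / 2) + (\<Sum>v\<in>Ql. \<bar>c' v\<bar>)"
    proof (intro add_mono sum_mono)
      fix v assume "v \<in> Qa"
      then have "norm v = 1" using unit \<open>Qa \<subseteq> Q\<close> by blast
      then show "norm (((c' v - \<beta>' v) / 2) *\<^sub>R v) \<le> (\<bar>c' v\<bar> + \<bar>\<beta>' v\<bar>) / 2"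
        using abs_triangle_ineq4[of "c' v" "\<beta>' v"] by simp
    next
      fix v assume "v \<in> Ql"
      then have "v \<notin> P" using P_active active_not_linear_neuron unfolding Ql_def by blast
      then have "\<beta>' v = 0" by (simp add: \<beta>'_def)
      moreover have "norm v = 1" using unit \<open>v \<in> Ql\<close> \<open>Ql \<subseteq> Q\<close> by blast
      ultimately show "norm ((c' v - \<beta>' v) *\<^sub>R v) \<le> \<bar>c' v\<bar>" by simp
    qed
    finally show ?thesis by (simp add: sum_divide_distrib[symmetric] sum.distrib)
  qed
  have "(\<Sum>v\<in>Qa. \<bar>\<beta>' v\<bar>) = (\<Sum>p\<in>P. \<bar>\<beta> p\<bar>)"
    using Q(1) \<open>P \<subseteq> Qa\<close> \<open>Qa \<subseteq> Q\<close>
    by (intro sum.mono_neutral_cong_right) (auto simp: \<beta>'_def intro: finite_subset)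
  moreover have "(\<Sum>v\<in>Qa. \<bar>c' v\<bar>) + (\<Sum>v\<in>Ql. \<bar>c' v\<bar>) \<le> (\<Sum>v\<in>S. \<bar>c v\<bar>)"
  proof -
    have "(\<Sum>v\<in>Qa. \<bar>c' v\<bar>) + (\<Sum>v\<in>Ql. \<bar>c' v\<bar>) = (\<Sum>v\<in>Qa \<union> Ql. \<bar>c' v\<bar>)"
      using Q(1) \<open>Qa \<subseteq> Q\<close> \<open>Ql \<subseteq> Q\<close> active_not_linear_neuron unfolding Qa_def Ql_def
      by (intro sum.union_disjoint[symmetric]) auto
    also have "\<dots> \<le> (\<Sum>v\<in>Q. \<bar>c' v\<bar>)"
      using Q(1) \<open>Qa \<subseteq> Q\<close> \<open>Ql \<subseteq> Q\<close> by (intro sum_mono2) auto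
    also have "\<dots> = (\<Sum>v\<in>S. \<bar>c v\<bar>)"
      using Q(1) \<open>S \<subseteq> Q\<close> by (intro sum.mono_neutral_cong_right) (auto simp: c'_def)
    finally show ?thesis .
  qed
  moreover have "0 \<le> (\<Sum>v\<in>Ql. \<bar>c' v\<bar>)" by (simp add: sum_nonneg)
  ultimately show ?thesis using \<beta>_le r_le by argo
qed

lemma sum_add_delta_mult:
  fixes \<beta> h :: "'a \<Rightarrow> real"
  assumes "finite A" "q \<in> A"
  shows "(\<Sum>p\<in>A. (\<beta> p + (if p = q then \<gamma> else 0)) * h p) = (\<Sum>p\<in>A. \<beta> p * h p) + \<gamma> * h q"
  using assms by (simp add: distrib_right sum.distrib if_distrib[of "\<lambda>t. t * _"] cong: if_cong)

lemma sum_abs_add_delta_le: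
  fixes \<beta> :: "'a \<Rightarrow> real"
  assumes "finite A" "q \<in> A"
  shows "(\<Sum>p\<in>A. \<bar>\<beta> p + (if p = q then \<gamma> else 0)\<bar>) \<le> (\<Sum>p\<in>A. \<bar>\<beta> p\<bar>) + \<bar>\<gamma>\<bar>"
proof -
  have "(\<Sum>p\<in>A. \<bar>\<beta> p + (if p = q then \<gamma> else 0)\<bar>) \<le> (\<Sum>p\<in>A. \<bar>\<beta> p\<bar> + (if p = q then \<bar>\<gamma>\<bar> else 0))"
    by (intro sum_mono) (simp add: abs_triangle_ineq)
  also have "\<dots> = (\<Sum>p\<in>A. \<bar>\<beta> p\<bar>) + \<bar>\<gamma>\<bar>"
    using assms by (simp add: sum.distrib)
  finally show ?thesis .
qed

definition one_neuron_linear :: "((real^'d::finite) \<times> real) set \<Rightarrow> ((real^'d) \<times> real) set" where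
  "one_neuron_linear P = {l *\<^sub>R u | l u. linear_neuron u \<or> u \<in> P}"

text \<open>The last three conditions say that the linear part can be realised by the \<open>N - card P\<close>
  neurons not spent on kinks: with two neurons in general, with one if r is a multiple of a
  linear neuron or of a kink direction (whose coefficient absorbs the other half), and with none
  only if \<open>r = 0\<close>.\<close>

definition reduced_form ::
    "nat \<Rightarrow> (real^'d::finite \<Rightarrow> real) \<Rightarrow> ((real^'d) \<times> real) set \<Rightarrow> ((real^'d) \<times> real \<Rightarrow> real)
      \<Rightarrow> (real^'d) \<times> real \<Rightarrow> bool" where
  "reduced_form N g P \<beta> r \<longleftrightarrow>
     finite P \<and> P \<subseteq> sphere 0 1 \<and> (\<forall>p\<in>P. active_neuron p \<and> - p \<notin> P) \<and>
     (\<forall>x\<in>cball 0 1. g x = (\<Sum>p\<in>P. \<beta> p * relu ((x, 1) \<bullet> p)) + (x, 1) \<bullet> r) \<and>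
     card P \<le> N \<and> (card P = N \<longrightarrow> r = 0) \<and> (N = Suc (card P) \<longrightarrow> r \<in> one_neuron_linear P)"

lemma zero_in_one_neuron_linear: "0 \<in> one_neuron_linear P"
  unfolding one_neuron_linear_def linear_neuron_def
  by (rule CollectI, intro exI[of _ 0] exI[of _ 0]) simp

lemma reduced_form_Suc_add_linear:
  assumes "reduced_form N g P \<beta> r" "l \<in> one_neuron_linear P"
    and "\<forall>x\<in>cball 0 1. g' x = (\<Sum>p\<in>P. \<beta>' p * relu ((x, 1) \<bullet> p)) + (x, 1) \<bullet> (r + l)"
  shows "reduced_form (Suc N) g' P \<beta>' (r + l)"
  using assms unfolding reduced_form_def by auto

lemma reduced_form_Suc_insert:
  assumes "reduced_form N g P \<beta> r" "q \<in> sphere 0 1" "active_neuron q" "q \<notin> P" "- q \<notin> P"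
    and "\<forall>x\<in>cball 0 1. g' x = g x + \<gamma> * relu ((x, 1) \<bullet> q)"
  shows "reduced_form (Suc N) g' (insert q P) (\<beta>(q := \<gamma>)) r"
  unfolding reduced_form_def
proof (intro conjI)
  have P: "finite P" "P \<subseteq> sphere 0 1" "\<forall>p\<in>P. active_neuron p \<and> - p \<notin> P" "card P \<le> N"
    "card P = N \<longrightarrow> r = 0" "N = Suc (card P) \<longrightarrow> r \<in> one_neuron_linear P"
    and rep: "\<forall>x\<in>cball 0 1. g x = (\<Sum>p\<in>P. \<beta> p * relu ((x, 1) \<bullet> p)) + (x, 1) \<bullet> r"
    using assms(1) unfolding reduced_form_def by auto
  have card: "card (insert q P) = Suc (card P)" using P(1) assms(4) by simp
  show "finite (insert q P)" "insert q P \<subseteq> sphere 0 1" using P(1,2) assms(2) by auto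
  show "card (insert q P) \<le> Suc N" "card (insert q P) = Suc N \<longrightarrow> r = 0" using card P(4,5) by auto
  have "one_neuron_linear P \<subseteq> one_neuron_linear (insert q P)"
    unfolding one_neuron_linear_def by blast
  then show "Suc N = Suc (card (insert q P)) \<longrightarrow> r \<in> one_neuron_linear (insert q P)"
    using card P(6) by auto
  have "q \<noteq> - q" using assms(2) by (intro neq_uminus_if_nonzero) auto
  then show "\<forall>p\<in>insert q P. active_neuron p \<and> - p \<notin> insert q P"
    using P(3) assms(3,5) by (metis insert_iff minus_minus)
  have "(\<Sum>p\<in>insert q P. (\<beta>(q := \<gamma>)) p * h p) = \<gamma> * h q + (\<Sum>p\<in>P. \<beta> p * h p)" for h
    using P(1) assms(4) by (auto intro!: sum.cong)
  then show "\<forall>x\<in>cball 0 1. g' x = (\<Sum>p\<in>insert q P. (\<beta>(q := \<gamma>)) p * relu ((x, 1) \<bullet> p)) + (x, 1) \<bullet> r"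
    using assms(6) rep by simp
qed

lemma reduced_form_Suc_add_unit_active:
  assumes red: "reduced_form N g P \<beta> r" and q: "q \<in> sphere 0 1" "active_neuron q"
  shows "\<exists>P' \<beta>' r'. reduced_form (Suc N) (\<lambda>x. g x + \<gamma> * relu ((x, 1) \<bullet> q)) P' \<beta>' r'"
proof -
  have P: "finite P"
    and rep: "\<forall>x\<in>cball 0 1. g x = (\<Sum>p\<in>P. \<beta> p * relu ((x, 1) \<bullet> p)) + (x, 1) \<bullet> r"
    using red unfolding reduced_form_def by auto
  consider (kink) "q \<in> P" | (opposite_kink) "- q \<in> P" | (new_kink) "q \<notin> P" "- q \<notin> P" by blast
  then show ?thesis
  proof cases
    case kink
    have "reduced_form (Suc N) (\<lambda>x. g x + \<gamma> * relu ((x, 1) \<bullet> q)) P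
        (\<lambda>p. \<beta> p + (if p = q then \<gamma> else 0)) (r + 0)"
      using rep by (intro reduced_form_Suc_add_linear[OF red zero_in_one_neuron_linear])
        (simp add: sum_add_delta_mult[OF P kink])
    then show ?thesis by blast
  next
    case opposite_kink
    have "\<gamma> *\<^sub>R q = (- \<gamma>) *\<^sub>R (- q)" by simp
    then have "\<gamma> *\<^sub>R q \<in> one_neuron_linear P"
      unfolding one_neuron_linear_def using opposite_kink by blast
    moreover have "\<gamma> * relu ((x, 1) \<bullet> q) = \<gamma> * relu ((x, 1) \<bullet> (- q)) + (x, 1) \<bullet> (\<gamma> *\<^sub>R q)" for x
      using relu_eq_relu_minus_add[of "(x, 1) \<bullet> q"] by (simp add: distrib_left)
    ultimately have "reduced_form (Suc N) (\<lambda>x. g x + \<gamma> * relu ((x, 1) \<bullet> q)) P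
        (\<lambda>p. \<beta> p + (if p = - q then \<gamma> else 0)) (r + \<gamma> *\<^sub>R q)"
      using rep by (intro reduced_form_Suc_add_linear[OF red])
        (simp_all add: sum_add_delta_mult[OF P opposite_kink] inner_add_right)
    then show ?thesis by blast
  next
    case new_kink
    have "reduced_form (Suc N) (\<lambda>x. g x + \<gamma> * relu ((x, 1) \<bullet> q)) (insert q P) (\<beta>(q := \<gamma>)) r"
      by (rule reduced_form_Suc_insert[OF red q new_kink]) simp
    then show ?thesis by blast
  qed
qed

lemma reduced_form_Suc_add_neuron:
  fixes w :: "(real^'d::finite) \<times> real"
  assumes red: "reduced_form N g P \<beta> r"
  shows "\<exists>P' \<beta>' r'. reduced_form (Suc N) (\<lambda>x. g x + \<alpha> * relu ((x, 1) \<bullet> w)) P' \<beta>' r'"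
proof -
  have rep: "\<forall>x\<in>cball 0 1. g x = (\<Sum>p\<in>P. \<beta> p * relu ((x, 1) \<bullet> p)) + (x, 1) \<bullet> r"
    using red unfolding reduced_form_def by auto
  consider (active) "active_neuron w" | (linear) "linear_neuron w"
    | (dead) "\<not> active_neuron w" "\<not> linear_neuron w" by blast
  then show ?thesis
  proof cases
    case active
    define q where "q = w /\<^sub>R norm w"
    have "w \<noteq> 0" using active_neuron_fst_nonzero[OF active] by auto
    then have q: "q \<in> sphere 0 1" "active_neuron q"
      using active active_neuron_scaleR[of "inverse (norm w)" w] unfolding q_def by auto
    have scale: "\<alpha> * relu ((x, 1) \<bullet> w) = (\<alpha> * norm w) * relu ((x, 1) \<bullet> q)" for x
    proof -
      have "(x, 1) \<bullet> w = norm w * ((x, 1) \<bullet> q)" unfolding q_def using \<open>w \<noteq> 0\<close> by simp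
      then show ?thesis by (simp add: relu_mult_nonneg)
    qed
    show ?thesis
      unfolding scale by (rule reduced_form_Suc_add_unit_active[OF red q])
  next
    case linear
    have "\<alpha> *\<^sub>R w \<in> one_neuron_linear P" unfolding one_neuron_linear_def using linear by blast
    then have "reduced_form (Suc N) (\<lambda>x. g x + \<alpha> * relu ((x, 1) \<bullet> w)) P \<beta> (r + \<alpha> *\<^sub>R w)"
      using rep relu_linear_neuron[OF _ linear]
      by (intro reduced_form_Suc_add_linear[OF red]) (simp_all add: inner_add_right)
    then show ?thesis by blast
  next
    case dead
    then have "reduced_form (Suc N) (\<lambda>x. g x + \<alpha> * relu ((x, 1) \<bullet> w)) P \<beta> (r + 0)"
      using rep relu_dead_neuron[OF _ dead]
      by (intro reduced_form_Suc_add_linear[OF red zero_in_one_neuron_linear]) simp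
    then show ?thesis by blast
  qed
qed

lemma reduced_form_exists: "\<exists>P \<beta> r. reduced_form N (f_param N a w) P \<beta> r"
proof (induction N)
  case 0
  have "reduced_form 0 (f_param 0 a w) {} (\<lambda>_. 0) 0"
    unfolding reduced_form_def by (simp add: f_param_def)
  then show ?case by blast
next
  case (Suc N)
  from Suc obtain P \<beta> r where "reduced_form N (f_param N a w) P \<beta> r" by blast
  moreover have "f_param (Suc N) a w = (\<lambda>x. f_param N a w x + a N * relu ((x, 1) \<bullet> w N))"
    by (simp add: f_param_def fun_eq_iff)
  ultimately show ?case by (simp only:) (rule reduced_form_Suc_add_neuron)
qed

definition list_net :: "(real \<times> ((real^'d::finite) \<times> real)) list \<Rightarrow> real^'d \<Rightarrow> real" where
  "list_net L x = (\<Sum>(a, w)\<leftarrow>L. a * relu ((x, 1) \<bullet> w))"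

definition list_cost :: "(real \<times> ((real^'d::finite) \<times> real)) list \<Rightarrow> real" where
  "list_cost L = (\<Sum>(a, w)\<leftarrow>L. \<bar>a\<bar> * norm w)"

lemma list_net_append [simp]: "list_net (L @ M) x = list_net L x + list_net M x"
  by (simp add: list_net_def)

lemma list_cost_append [simp]: "list_cost (L @ M) = list_cost L + list_cost M"
  by (simp add: list_cost_def)

lemma list_net_single [simp]: "list_net [(a, w)] x = a * relu ((x, 1) \<bullet> w)"
  by (simp add: list_net_def)

lemma list_cost_single [simp]: "list_cost [(a, w)] = \<bar>a\<bar> * norm w"
  by (simp add: list_cost_def)

lemma list_net_map_distinct:
  assumes "distinct ps"
  shows "list_net (map (\<lambda>p. (\<beta> p, p)) ps) x = (\<Sum>p\<in>set ps. \<beta> p * relu ((x, 1) \<bullet> p))"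
    and "list_cost (map (\<lambda>p. (\<beta> p, p)) ps) = (\<Sum>p\<in>set ps. \<bar>\<beta> p\<bar> * norm p)"
  using assms by (simp_all add: list_net_def list_cost_def o_def sum_list_distinct_conv_sum_set)

lemma list_net_linear_pair:
  "list_net [(1, r), (- 1, - r)] x = (x, 1) \<bullet> r" "list_cost [(1, r), (- 1, - r)] = 2 * norm r"
  using relu_eq_relu_minus_add[of "(x, 1) \<bullet> r"] by (simp_all add: list_net_def list_cost_def)

lemma f_param_of_list:
  fixes L :: "(real \<times> ((real^'d::finite) \<times> real)) list"
  assumes "length L \<le> N"
  shows "\<exists>a w. (\<forall>x. f_param N a w x = list_net L x) \<and> kappa_param N a w = list_cost L"
proof -
  define a where "a i = (if i < length L then fst (L ! i) else 0)" for i
  define w where "w i = (if i < length L then snd (L ! i) else 0)" for i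
  have "f_param N a w x = list_net L x" for x
  proof -
    have "f_param N a w x = (\<Sum>i<length L. a i * relu ((x, 1) \<bullet> w i))"
      unfolding f_param_def using assms by (intro sum.mono_neutral_right) (auto simp: a_def)
    also have "\<dots> = list_net L x"
      unfolding list_net_def sum_list_sum_nth
      by (rule sum.cong) (auto simp: a_def w_def atLeast0LessThan split: prod.split)
    finally show ?thesis .
  qed
  moreover have "kappa_param N a w = list_cost L"
  proof -
    have "kappa_param N a w = (\<Sum>i<length L. \<bar>a i\<bar> * norm (w i))"
      unfolding kappa_param_def using assms by (intro sum.mono_neutral_right) (auto simp: a_def)
    also have "\<dots> = list_cost L"
      unfolding list_cost_def sum_list_sum_nth
      by (rule sum.cong) (auto simp: a_def w_def atLeast0LessThan split: prod.split)
    finally show ?thesis .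
  qed
  ultimately show ?thesis by blast
qed

lemma reduced_form_list_net:
  assumes red: "reduced_form N g P \<beta> r"
  shows "\<exists>L. length L \<le> N \<and> (\<forall>x\<in>cball 0 1. list_net L x = g x)
             \<and> list_cost L \<le> (\<Sum>p\<in>P. \<bar>\<beta> p\<bar>) + 2 * norm r"
proof -
  have P: "finite P" "P \<subseteq> sphere 0 1" "card P \<le> N" "card P = N \<longrightarrow> r = 0"
      "N = Suc (card P) \<longrightarrow> r \<in> one_neuron_linear P"
    and rep: "\<forall>x\<in>cball 0 1. g x = (\<Sum>p\<in>P. \<beta> p * relu ((x, 1) \<bullet> p)) + (x, 1) \<bullet> r"
    using red unfolding reduced_form_def by auto
  obtain ps where ps: "set ps = P" "distinct ps" using finite_distinct_list[OF P(1)] by blast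
  define kinks where "kinks (\<gamma> :: _ \<Rightarrow> real) = map (\<lambda>p. (\<gamma> p, p)) ps" for \<gamma>
  have kinks: "length (kinks \<gamma>) = card P"
      "list_net (kinks \<gamma>) x = (\<Sum>p\<in>P. \<gamma> p * relu ((x, 1) \<bullet> p))"
      "list_cost (kinks \<gamma>) = (\<Sum>p\<in>P. \<bar>\<gamma> p\<bar>)" for \<gamma> x
    using ps P(2) distinct_card[OF ps(2)] unfolding kinks_def list_net_map_distinct[OF ps(2)]
    by (auto intro!: sum.cong)
  consider (full) "card P = N" | (spare) "card P + 2 \<le> N" | (one_left) "N = Suc (card P)"
    using P(3) by linarith
  then show ?thesis
  proof cases
    case full
    then show ?thesis using P(4) rep kinks by (intro exI[of _ "kinks \<beta>"]) simp
  next
    case spare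
    have "list_net (kinks \<beta> @ [(1, r), (- 1, - r)]) x = g x" if "x \<in> cball 0 1" for x
      using rep that by (simp only: list_net_append list_net_linear_pair kinks)
    moreover have "list_cost (kinks \<beta> @ [(1, r), (- 1, - r)]) = (\<Sum>p\<in>P. \<bar>\<beta> p\<bar>) + 2 * norm r"
      by (simp only: list_cost_append list_net_linear_pair kinks)
    ultimately show ?thesis using spare kinks by (intro exI[of _ "kinks \<beta> @ [(1, r), (- 1, - r)]"]) simp
  next
    case one_left
    then obtain l u where r: "r = l *\<^sub>R u" and u: "linear_neuron u \<or> u \<in> P"
      using P(5) unfolding one_neuron_linear_def by blast
    show ?thesis
    proof (cases "u \<in> P")
      case False
      then have "linear_neuron u" using u by blast
      then show ?thesis
        using one_left rep kinks relu_linear_neuron[of _ u] r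
        by (intro exI[of _ "kinks \<beta> @ [(l, u)]"]) simp
    next
      case True
      define \<beta>' where "\<beta>' p = \<beta> p + (if p = u then l else 0)" for p
      have "norm u = 1" using True P(2) by auto
      have "list_net (kinks \<beta>' @ [(- l, - u)]) x
          = (\<Sum>p\<in>P. \<beta> p * relu ((x, 1) \<bullet> p)) + l * (relu ((x, 1) \<bullet> u) - relu (- ((x, 1) \<bullet> u)))" for x
        by (simp add: kinks \<beta>'_def sum_add_delta_mult[OF P(1) True] right_diff_distrib)
      then have "list_net (kinks \<beta>' @ [(- l, - u)]) x = g x" if "x \<in> cball 0 1" for x
        using rep that relu_eq_relu_minus_add[of "(x, 1) \<bullet> u"] by (simp add: r)
      moreover have "list_cost (kinks \<beta>' @ [(- l, - u)]) \<le> (\<Sum>p\<in>P. \<bar>\<beta> p\<bar>) + 2 * norm r"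
        using sum_abs_add_delta_le[OF P(1) True, of \<beta> l] \<open>norm u = 1\<close>
        by (simp add: kinks \<beta>'_def r)
      ultimately show ?thesis using one_left kinks by (intro exI[of _ "kinks \<beta>' @ [(- l, - u)]"]) simp
    qed
  qed
qed

lemma reduced_form_realization:
  assumes "reduced_form N g P \<beta> r"
  shows "\<exists>a w. (\<forall>x\<in>cball 0 1. f_param N a w x = g x) \<and> kappa_param N a w \<le> (\<Sum>p\<in>P. \<bar>\<beta> p\<bar>) + 2 * norm r"
proof -
  obtain L where L: "length L \<le> N" "\<forall>x\<in>cball 0 1. list_net L x = g x"
      "list_cost L \<le> (\<Sum>p\<in>P. \<bar>\<beta> p\<bar>) + 2 * norm r"
    using reduced_form_list_net[OF assms] by blast
  obtain a w where "\<forall>x. f_param N a w x = list_net L x" "kappa_param N a w = list_cost L"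
    using f_param_of_list[OF L(1)] by blast
  then show ?thesis using L(2,3) by (intro exI[of _ a] exI[of _ w]) auto
qed

lemma param_cost_le_three_total_variation:
  fixes S :: "((real^'d::finite) \<times> real) set"
  assumes "finite S" "S \<subseteq> sphere 0 1" "\<forall>x\<in>cball 0 1. f_meas S c x = f_param N a w x"
  shows "\<exists>a' w'. (\<forall>x\<in>cball 0 1. f_param N a' w' x = f_param N a w x)
                 \<and> kappa_param N a' w' \<le> 3 * (\<Sum>v\<in>S. \<bar>c v\<bar>)"
proof -
  obtain P \<beta> r where red: "reduced_form N (f_param N a w) P \<beta> r"
    using reduced_form_exists by blast
  have "(\<Sum>p\<in>P. \<bar>\<beta> p\<bar>) + 2 * norm r \<le> 3 * (\<Sum>v\<in>S. \<bar>c v\<bar>)"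
    using red assms
    by (intro reduced_cost_le_three_total_variation) (auto simp: reduced_form_def f_meas_def)
  then show ?thesis using reduced_form_realization[OF red] by fastforce
qed

lemma measure_of_param:
  fixes w :: "nat \<Rightarrow> (real^'d::finite) \<times> real"
  shows "\<exists>S c. finite S \<and> S \<subseteq> sphere 0 1 \<and> (\<forall>x. f_meas S c x = f_param N a w x)
           \<and> (\<Sum>v\<in>S. \<bar>c v\<bar>) \<le> kappa_param N a w"
proof -
  define I where "I = {i\<in>{..<N}. w i \<noteq> 0}"
  define dir where "dir i = w i /\<^sub>R norm (w i)" for i
  define S where "S = dir ` I"
  define c where "c u = (\<Sum>i\<in>{i\<in>I. dir i = u}. a i * norm (w i))" for u
  have "finite I" unfolding I_def by simp
  then have "finite S" unfolding S_def by simp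
  have "S \<subseteq> sphere 0 1" unfolding S_def dir_def I_def by auto
  have "f_meas S c x = f_param N a w x" for x
  proof -
    have "f_meas S c x = (\<Sum>u\<in>S. \<Sum>i\<in>{i\<in>I. dir i = u}. a i * norm (w i) * relu ((x, 1) \<bullet> dir i))"
      unfolding f_meas_def c_def sum_distrib_right by (intro sum.cong) auto
    also have "\<dots> = (\<Sum>i\<in>I. a i * norm (w i) * relu ((x, 1) \<bullet> dir i))"
      by (rule sum.group[OF \<open>finite I\<close> \<open>finite S\<close>]) (simp add: S_def)
    also have "\<dots> = (\<Sum>i\<in>I. a i * relu ((x, 1) \<bullet> w i))"
    proof (rule sum.cong[OF refl])
      fix i assume "i \<in> I"
      then have "(x, 1) \<bullet> w i = norm (w i) * ((x, 1) \<bullet> dir i)" unfolding dir_def I_def by simp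
      then show "a i * norm (w i) * relu ((x, 1) \<bullet> dir i) = a i * relu ((x, 1) \<bullet> w i)"
        by (simp add: relu_mult_nonneg)
    qed
    also have "\<dots> = f_param N a w x"
      unfolding f_param_def I_def by (intro sum.mono_neutral_left) (auto simp: relu_def)
    finally show ?thesis .
  qed
  moreover have "(\<Sum>v\<in>S. \<bar>c v\<bar>) \<le> kappa_param N a w"
  proof -
    have "(\<Sum>v\<in>S. \<bar>c v\<bar>) \<le> (\<Sum>u\<in>S. \<Sum>i\<in>{i\<in>I. dir i = u}. \<bar>a i\<bar> * norm (w i))"
      unfolding c_def by (intro sum_mono order_trans[OF sum_abs]) (simp add: abs_mult)
    also have "\<dots> = (\<Sum>i\<in>I. \<bar>a i\<bar> * norm (w i))"
      by (rule sum.group[OF \<open>finite I\<close> \<open>finite S\<close>]) (simp add: S_def)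
    also have "\<dots> \<le> kappa_param N a w"
      unfolding kappa_param_def I_def by (intro sum_mono2) auto
    finally show ?thesis .
  qed
  ultimately show ?thesis using \<open>finite S\<close> \<open>S \<subseteq> sphere 0 1\<close> by blast
qed

lemma kappa_fun_le_total_variation:
  fixes f :: "real^'d::finite \<Rightarrow> real"
  assumes "finite S" "S \<subseteq> unit_sphere" "\<forall>x\<in>unit_ball. f x = f_meas S c x"
  shows "kappa_fun f \<le> (\<Sum>v\<in>S. \<bar>c v\<bar>)"
  unfolding kappa_fun_def
proof (rule cInf_lower)
  show "(\<Sum>v\<in>S. \<bar>c v\<bar>) \<in> {\<Sum>v\<in>S. \<bar>c v\<bar> | S c. finite S \<and> S \<subseteq> unit_sphere \<and> (\<forall>x\<in>unit_ball. f x = f_meas S c x)}"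
    using assms by blast
next
  show "bdd_below {\<Sum>v\<in>S. \<bar>c v\<bar> | S c. finite S \<and> S \<subseteq> unit_sphere \<and> (\<forall>x\<in>unit_ball. f x = f_meas S c x)}"
  proof (rule bdd_belowI)
    fix t assume "t \<in> {\<Sum>v\<in>S. \<bar>c v\<bar> | S c. finite S \<and> S \<subseteq> unit_sphere \<and> (\<forall>x\<in>unit_ball. f x = f_meas S c x)}"
    then obtain S' :: "((real^'d) \<times> real) set" and c' where "t = (\<Sum>v\<in>S'. \<bar>c' v\<bar>)" by blast
    then show "0 \<le> t" by (simp add: sum_nonneg)
  qed
qed

lemma kappa_inf_param_le_kappa_param:
  fixes f :: "real^'d::finite \<Rightarrow> real"
  assumes "\<forall>x\<in>unit_ball. f x = f_param N a w x"
  shows "kappa_inf_param N f \<le> kappa_param N a w"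
  unfolding kappa_inf_param_def
proof (rule cInf_lower)
  show "kappa_param N a w \<in> {kappa_param N a w | a w. \<forall>x\<in>unit_ball. f x = f_param N a w x}"
    using assms by blast
next
  show "bdd_below {kappa_param N a w | a w. \<forall>x\<in>unit_ball. f x = f_param N a w x}"
  proof (rule bdd_belowI)
    fix k assume "k \<in> {kappa_param N a w | a w. \<forall>x\<in>unit_ball. f x = f_param N a w x}"
    then obtain a' and w' :: "nat \<Rightarrow> (real^'d) \<times> real" where "k = kappa_param N a' w'" by blast
    then show "0 \<le> k" by (simp add: kappa_param_def sum_nonneg)
  qed
qed

lemma kappa_fun_le_kappa_param:
  fixes f :: "real^'d::finite \<Rightarrow> real"
  assumes "\<forall>x\<in>unit_ball. f x = f_param N a w x"
  shows "kappa_fun f \<le> kappa_param N a w"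
proof -
  obtain S c where S: "finite S" "S \<subseteq> sphere 0 1" "\<forall>x. f_meas S c x = f_param N a w x"
      "(\<Sum>v\<in>S. \<bar>c v\<bar>) \<le> kappa_param N a w"
    using measure_of_param[of N a w] by blast
  have "kappa_fun f \<le> (\<Sum>v\<in>S. \<bar>c v\<bar>)"
  proof (rule kappa_fun_le_total_variation)
    show "finite S" "S \<subseteq> unit_sphere" using S(1,2) by (simp_all add: unit_sphere_def)
    show "\<forall>x\<in>unit_ball. f x = f_meas S c x" using assms S(3) by simp
  qed
  with S(4) show ?thesis by linarith
qed

lemma kappa_inf_param_le_three_total_variation:
  fixes f :: "real^'d::finite \<Rightarrow> real"
  assumes f: "\<forall>x\<in>unit_ball. f x = f_param N a w x"
    and S: "finite S" "S \<subseteq> unit_sphere" "\<forall>x\<in>unit_ball. f x = f_meas S c x"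
  shows "kappa_inf_param N f \<le> 3 * (\<Sum>v\<in>S. \<bar>c v\<bar>)"
proof -
  have "\<forall>x\<in>cball 0 1. f_meas S c x = f_param N a w x"
    using f S(3) unfolding unit_ball_def by simp
  then obtain a' w' where a'w': "\<forall>x\<in>cball 0 1. f_param N a' w' x = f_param N a w x"
      "kappa_param N a' w' \<le> 3 * (\<Sum>v\<in>S. \<bar>c v\<bar>)"
    using param_cost_le_three_total_variation[of S c N a w] S(1,2) unfolding unit_sphere_def by blast
  have "kappa_inf_param N f \<le> kappa_param N a' w'"
    using f a'w'(1) unfolding unit_ball_def by (intro kappa_inf_param_le_kappa_param) (simp add: unit_ball_def)
  with a'w'(2) show ?thesis by linarith
qed

theorem theorem1:
  fixes f :: "real^'d \<Rightarrow> real" and N :: nat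
  assumes "f \<in> NN N"
  shows "kappa_fun f \<le> kappa_inf_param N f \<and> kappa_inf_param N f \<le> 3 * kappa_fun f"
proof
  obtain a w where aw: "\<forall>x\<in>unit_ball. f x = f_param N a w x"
    using assms unfolding NN_def by blast
  show "kappa_fun f \<le> kappa_inf_param N f"
    unfolding kappa_inf_param_def
  proof (rule cInf_greatest)
    show "{kappa_param N a w | a w. \<forall>x\<in>unit_ball. f x = f_param N a w x} \<noteq> {}"
      using aw by blast
  qed (auto intro: kappa_fun_le_kappa_param)
  obtain S c where S: "finite S" "S \<subseteq> sphere 0 1" "\<forall>x. f_meas S c x = f_param N a w x"
    using measure_of_param[of N a w] by blast
  then have "\<forall>x\<in>unit_ball. f x = f_meas S c x" using aw by simp
  have "kappa_inf_param N f / 3 \<le> kappa_fun f"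
    unfolding kappa_fun_def
  proof (rule cInf_greatest)
    show "{\<Sum>v\<in>S. \<bar>c v\<bar> | S c. finite S \<and> S \<subseteq> unit_sphere \<and> (\<forall>x\<in>unit_ball. f x = f_meas S c x)} \<noteq> {}"
      using S(1,2) \<open>\<forall>x\<in>unit_ball. f x = f_meas S c x\<close> unfolding unit_sphere_def by blast
  qed (auto dest: kappa_inf_param_le_three_total_variation[OF aw])
  then show "kappa_inf_param N f \<le> 3 * kappa_fun f" by simp
qed

end
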